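(* Let $D$ be a tournament missing disjoint paths of length 2, and let $C=a_1b_1c_1,\dots,a_kb_kc_k$ be a double cycle in $\Delta(D)$. Then there exists $s\in\{1,\dots,k\}$ such that $|N^+_{D[K(C)]}(a_s)|\le|N^{++}_{D[K(C)]}(a_s)|$ or $|N^+_{D[K(C)]}(c_s)|\le|N^{++}_{D[K(C)]}(c_s)|$.
   Context: All digraphs are finite oriented graphs; $D[X]$ is the subdigraph induced by $X$. $N^+_H(v)$ is the out-neighborhood in $H$; $N^{++}_H(v)$ is the set of vertices $w\notin N_H^+(v)\cup\{v\}$ with $u\to w$ in $H$ for some $u\in N_H^+(v)$. A missing edge is a pair of distinct non-adjacent vertices; the missing graph is formed by the missing edges. $D$ is a tournament missing disjoint paths of length 2 if its missing graph is a vertex-disjoint union of paths each with exactly two edges. For missing edges $\{x,y\},\{a,b\}$, $\{x,y\}$ loses to $\{a,b\}$ (written $xy\to ab$) if the endpoints can be labelled so that $x\to a$, $b\notin N^+(x)\cup N^{++}(x)$, $y\to b$, $a\notin N^+(y)\cup N^{++}(y)$ (neighborhoods in $D$). $\Delta(D)$ has the missing edges as vertices and arcs $(e,e')$ whenever $e$ loses to $e'$. For missing paths $abc$, $xyz$ (edges $ab,bc$ and $xy,yz$), $abc\to xyz$ means each of $ab,bc$ loses to each of $xy,yz$. A double cycle is a sequence $C=a_1b_1c_1,\dots,a_kb_kc_k$ ($k\ge2$) of distinct missing paths of length 2 (components of the missing graph) with $a_ib_ic_i\to a_{i+1}b_{i+1}c_{i+1}$ for all $i$, indices modulo $k$. $K(C)=\{a_i,b_i,c_i: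 1\le i\le k\}$. *)

theory Defs
  imports Main
begin

definition oriented_graph :: "'a set \<Rightarrow> ('a \<Rightarrow> 'a \<Rightarrow> bool) \<Rightarrow> bool" where
  "oriented_graph V A \<longleftrightarrow> finite V \<and> (\<forall>u v. A u v \<longrightarrow> u \<in> V \<and> v \<in> V)
     \<and> (\<forall>v. \<not> A v v) \<and> (\<forall>u v. A u v \<longrightarrow> \<not> A v u)"

definition outN :: "'a set \<Rightarrow> ('a \<Rightarrow> 'a \<Rightarrow> bool) \<Rightarrow> 'a \<Rightarrow> 'a set" where
  "outN X A v = {w \<in> X. A v w}"

definition secN :: "'a set \<Rightarrow> ('a \<Rightarrow> 'a \<Rightarrow> bool) \<Rightarrow> 'a \<Rightarrow> 'a set" where
  "secN X A v = {w \<in> X. w \<notin> outN X A v \<and> w \<noteq> v \<and> (\<exists>u \<in> outN X A v. A u w)}"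

definition missing :: "'a set \<Rightarrow> ('a \<Rightarrow> 'a \<Rightarrow> bool) \<Rightarrow> 'a \<Rightarrow> 'a \<Rightarrow> bool" where
  "missing V A x y \<longleftrightarrow> x \<in> V \<and> y \<in> V \<and> x \<noteq> y \<and> \<not> A x y \<and> \<not> A y x"

text \<open>abc is a component of the missing graph which is a path with exactly the two edges ab, bc.\<close>
definition missing_path :: "'a set \<Rightarrow> ('a \<Rightarrow> 'a \<Rightarrow> bool) \<Rightarrow> 'a \<Rightarrow> 'a \<Rightarrow> 'a \<Rightarrow> bool" where
  "missing_path V A a b c \<longleftrightarrow> missing V A a b \<and> missing V A b c \<and> a \<noteq> c \<and> \<not> missing V A a c
     \<and> (\<forall>x y. missing V A x y \<and> (x \<in> {a,b,c} \<or> y \<in> {a,b,c})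
              \<longrightarrow> {x,y} = {a,b} \<or> {x,y} = {b,c})"

definition tournament_missing_P2s :: "'a set \<Rightarrow> ('a \<Rightarrow> 'a \<Rightarrow> bool) \<Rightarrow> bool" where
  "tournament_missing_P2s V A \<longleftrightarrow> oriented_graph V A \<and>
     (\<forall>x y. missing V A x y \<longrightarrow> (\<exists>a b c. missing_path V A a b c \<and> x \<in> {a,b,c} \<and> y \<in> {a,b,c}))"

text \<open>Missing edge e loses to missing edge e' (neighbourhoods taken in D).\<close>
definition loses :: "'a set \<Rightarrow> ('a \<Rightarrow> 'a \<Rightarrow> bool) \<Rightarrow> 'a set \<Rightarrow> 'a set \<Rightarrow> bool" where
  "loses V A e e' \<longleftrightarrow> (\<exists>x y p q. e = {x,y} \<and> e' = {p,q} \<and>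
      A x p \<and> q \<notin> outN V A x \<union> secN V A x \<and> A y q \<and> p \<notin> outN V A y \<union> secN V A y)"

definition path_loses :: "'a set \<Rightarrow> ('a \<Rightarrow> 'a \<Rightarrow> bool) \<Rightarrow> 'a \<times> 'a \<times> 'a \<Rightarrow> 'a \<times> 'a \<times> 'a \<Rightarrow> bool" where
  "path_loses V A P Q \<longleftrightarrow> (case P of (a,b,c) \<Rightarrow> case Q of (x,y,z) \<Rightarrow>
      (\<forall>e \<in> {{a,b},{b,c}}. \<forall>e' \<in> {{x,y},{y,z}}. loses V A e e'))"

text \<open>Double cycle, indexed 0..k-1 (indices mod k).\<close>
definition double_cycle :: "'a set \<Rightarrow> ('a \<Rightarrow> 'a \<Rightarrow> bool) \<Rightarrow> nat \<Rightarrow> (nat \<Rightarrow> 'a) \<Rightarrow> (nat \<Rightarrow> 'a) \<Rightarrow> (nat \<Rightarrow> 'a) \<Rightarrow> bool" where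
  "double_cycle V A k a b c \<longleftrightarrow> k \<ge> 2
     \<and> (\<forall>i<k. missing_path V A (a i) (b i) (c i))
     \<and> (\<forall>i<k. \<forall>j<k. i \<noteq> j \<longrightarrow> {a i, b i, c i} \<noteq> {a j, b j, c j})
     \<and> (\<forall>i<k. path_loses V A (a i, b i, c i) (a (Suc i mod k), b (Suc i mod k), c (Suc i mod k)))"

definition Kset :: "nat \<Rightarrow> (nat \<Rightarrow> 'a) \<Rightarrow> (nat \<Rightarrow> 'a) \<Rightarrow> (nat \<Rightarrow> 'a) \<Rightarrow> 'a set" where
  "Kset k a b c = (\<Union>i<k. {a i, b i, c i})"

end

theory Submission
  imports Defs
begin

text \<open>
  Consecutive paths a_i b_i c_i \<rightarrow> a_(i+1) b_(i+1) c_(i+1) of a double cycle are joined by one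
  of two rigid patterns of arcs, decided by the arc between b_i and b_(i+1). Fix an index s. Pushing
  these patterns around the cycle (forwards for arcs into {a_s, c_s}, backwards for arcs out of it)
  shows that all arcs between {a_s, c_s} and another path q are determined by whether a_s \<rightarrow> a_q.
  Let w be the end of {a_s, c_s} without out-neighbour on its own path. Apart from the paths s and
  s + 1, every path then contains at most two out-neighbours and at least one second out-neighbour
  of w if a_s \<rightarrow> a_q, and at most one and at least two otherwise. So |N+(w)| \<le> |N++(w)| as soon
  as a_s beats at most about half of the other a_q, and such an s exists by averaging the scores of
  the tournament on a_1, \<dots>, a_k, since not all links are backward.
\<close>

definition far :: "('v \<Rightarrow> 'v \<Rightarrow> bool) \<Rightarrow> 'v \<Rightarrow> 'v \<Rightarrow> bool" where
  "far A x y \<longleftrightarrow> \<not> A x y \<and> (\<forall>u. A x u \<longrightarrow> \<not> A u y)"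

lemma far_if_notin_outN_secN:
  assumes "oriented_graph V A" "y \<in> V" "y \<noteq> x" "y \<notin> outN V A x \<union> secN V A x"
  shows "far A x y"
  using assms unfolding far_def outN_def secN_def oriented_graph_def by blast

lemma far_arc_forward: "far A x y \<Longrightarrow> A x u \<Longrightarrow> A u y \<or> A y u \<Longrightarrow> A y u"
  unfolding far_def by blast

lemma far_arc_backward: "far A x y \<Longrightarrow> A u y \<Longrightarrow> A u x \<or> A x u \<Longrightarrow> A u x"
  unfolding far_def by blast

lemma secN_I:
  assumes "y \<in> X" "y \<noteq> x" "\<not> A x y" "u \<in> X" "A x u" "A u y"
  shows "y \<in> secN X A x"
  using assms unfolding secN_def outN_def by auto

lemma loses_doubleton_cases:
  assumes "loses V A {x, y} {p, q}" "x \<noteq> y" "p \<noteq> q"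
  shows "(A x p \<and> q \<notin> outN V A x \<union> secN V A x \<and> A y q \<and> p \<notin> outN V A y \<union> secN V A y)
       \<or> (A x q \<and> p \<notin> outN V A x \<union> secN V A x \<and> A y p \<and> q \<notin> outN V A y \<union> secN V A y)"
  using assms unfolding loses_def doubleton_eq_iff by auto

lemma sum_card_out_tournament:
  fixes R :: "'a \<Rightarrow> 'a \<Rightarrow> bool"
  assumes "finite S"
    and total: "\<And>x y. x \<in> S \<Longrightarrow> y \<in> S \<Longrightarrow> x \<noteq> y \<Longrightarrow> R x y \<or> R y x"
    and asym: "\<And>x y. R x y \<Longrightarrow> \<not> R y x"
  shows "2 * (\<Sum>x\<in>S. card {y \<in> S. R x y}) = card S * (card S - 1)"
proof -
  define E where "E = {(x, y) \<in> S \<times> S. R x y}"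
  have "finite E" unfolding E_def using assms(1) by (auto intro: finite_subset[of _ "S \<times> S"])
  then have fin: "finite E" "finite (prod.swap ` E)" by auto
  have "(\<Sum>x\<in>S. card {y \<in> S. R x y}) = card E"
  proof -
    have "E = (SIGMA x:S. {y \<in> S. R x y})" unfolding E_def by auto
    then show ?thesis using assms(1) by simp
  qed
  moreover have "card (prod.swap ` E) = card E" by (simp add: card_image)
  moreover have "E \<inter> prod.swap ` E = {}" unfolding E_def using asym by auto
  moreover have "E \<union> prod.swap ` E = S \<times> S - (\<lambda>x. (x, x)) ` S"
    unfolding E_def using total asym by (auto simp: image_iff) metis+
  moreover have "card (S \<times> S - (\<lambda>x. (x, x)) ` S) = card S * card S - card S"
    using assms(1) by (subst card_Diff_subset) (auto simp: card_image inj_on_def card_cartesian_product)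
  ultimately show ?thesis using card_Un_disjoint[OF fin] by (simp add: diff_mult_distrib2)
qed

lemma mod_cycle_offset:
  fixes k s q :: nat
  assumes "s < k" "q < k" "q \<noteq> s"
  obtains d where "0 < d" "d < k" "q = (s + d) mod k"
proof (cases "s < q")
  case True
  then show ?thesis using assms by (intro that[of "q - s"]) auto
next
  case False
  have "(s + (q + k - s)) mod k = q" using assms False by simp
  then show ?thesis using assms False by (intro that[of "q + k - s"]) auto
qed

lemma mod_cycle_induct:
  fixes k s q :: nat
  assumes "s < k" "q < k" "q \<noteq> s"
    and base: "P (Suc s mod k)"
    and step: "\<And>d. 0 < d \<Longrightarrow> Suc d < k \<Longrightarrow> P ((s + d) mod k) \<Longrightarrow> P ((s + Suc d) mod k)"
  shows "P q"
proof -
  obtain d where d: "0 < d" "d < k" "q = (s + d) mod k" using mod_cycle_offset assms(1-3) .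
  from d(1) have "1 \<le> d" by simp
  then have "P ((s + d) mod k)" using d(2)
    by (induction d rule: dec_induct) (use base step in auto)
  then show ?thesis using d(3) by simp
qed

lemma mod_cycle_induct_backward:
  fixes k s q :: nat
  assumes "s < k" "q < k" "q \<noteq> s"
    and base: "P ((s + (k - 1)) mod k)"
    and step: "\<And>d. 0 < d \<Longrightarrow> Suc d < k \<Longrightarrow> P ((s + Suc d) mod k) \<Longrightarrow> P ((s + d) mod k)"
  shows "P q"
proof -
  obtain d where d: "0 < d" "d < k" "q = (s + d) mod k" using mod_cycle_offset assms(1-3) .
  from d(2) have "d \<le> k - 1" by simp
  then have "P ((s + d) mod k)"
    by (induction d rule: inc_induct) (use base step d(1) in auto)
  then show ?thesis using d(3) by simp
qed

locale double_cycle_in_tournament =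
  fixes V :: "'v set" and A :: "'v \<Rightarrow> 'v \<Rightarrow> bool" and k :: nat and a b c :: "nat \<Rightarrow> 'v"
  assumes tournament: "tournament_missing_P2s V A" and cycle: "double_cycle V A k a b c"
begin

definition component :: "nat \<Rightarrow> 'v set" where "component i = {a i, b i, c i}"

definition succ :: "nat \<Rightarrow> nat" where "succ i = Suc i mod k"

abbreviation "K \<equiv> Kset k a b c"

lemma oriented: "oriented_graph V A"
  using tournament unfolding tournament_missing_P2s_def by auto

lemma irrefl: "\<not> A x x"
  using oriented unfolding oriented_graph_def by auto

lemma asym: "A x y \<Longrightarrow> \<not> A y x"
  using oriented unfolding oriented_graph_def by auto

lemma two_le_k: "2 \<le> k"
  using cycle unfolding double_cycle_def by auto

lemma missing_path_component: "i < k \<Longrightarrow> missing_path V A (a i) (b i) (c i)"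
  using cycle unfolding double_cycle_def by auto

lemma path_loses_succ: "i < k \<Longrightarrow> path_loses V A (a i, b i, c i) (a (succ i), b (succ i), c (succ i))"
  using cycle unfolding double_cycle_def succ_def by auto

lemma component_facts:
  assumes "i < k"
  shows "a i \<in> V" "b i \<in> V" "c i \<in> V" "a i \<noteq> b i" "b i \<noteq> c i" "a i \<noteq> c i"
    "\<not> A (a i) (b i)" "\<not> A (b i) (a i)" "\<not> A (b i) (c i)" "\<not> A (c i) (b i)"
  using missing_path_component[OF assms] unfolding missing_path_def missing_def by auto

lemma in_component: "a i \<in> component i" "b i \<in> component i" "c i \<in> component i"
  unfolding component_def by auto

lemma in_K: "i < k \<Longrightarrow> a i \<in> K \<and> b i \<in> K \<and> c i \<in> K"
  unfolding Kset_def by auto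

lemma K_eq_UN_component: "K = (\<Union>i<k. component i)"
  unfolding Kset_def component_def by simp

lemma component_subset_V: "i < k \<Longrightarrow> component i \<subseteq> V"
  using component_facts unfolding component_def by auto

lemma missing_edge_within_component:
  assumes "i < k" "missing V A x y" "x \<in> component i \<or> y \<in> component i"
  shows "x \<in> component i \<and> y \<in> component i"
proof -
  have "{x, y} = {a i, b i} \<or> {x, y} = {b i, c i}"
    using missing_path_component[OF assms(1)] assms(2,3) unfolding missing_path_def component_def by simp
  then show ?thesis unfolding component_def doubleton_eq_iff by auto
qed

lemma component_subset_if_meet:
  assumes "i < k" "j < k" "x \<in> component i" "x \<in> component j"
  shows "component i \<subseteq> component j"
proof -
  have ab: "missing V A (a i) (b i)" and bc: "missing V A (b i) (c i)"
    using missing_path_component[OF assms(1)] unfolding missing_path_def by auto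
  have "x = a i \<or> x = b i \<or> x = c i" using assms(3) unfolding component_def by auto
  then have "b i \<in> component j"
    using assms(4) missing_edge_within_component[OF assms(2) ab] missing_edge_within_component[OF assms(2) bc]
    by auto
  then show ?thesis
    using missing_edge_within_component[OF assms(2) ab] missing_edge_within_component[OF assms(2) bc]
    unfolding component_def by auto
qed

lemma component_disjoint:
  assumes "i < k" "j < k" "i \<noteq> j"
  shows "component i \<inter> component j = {}"
proof (rule ccontr)
  assume "component i \<inter> component j \<noteq> {}"
  then obtain x where "x \<in> component i" "x \<in> component j" by blast
  then have "component i = component j" using component_subset_if_meet assms(1,2) by blast
  then show False using cycle assms unfolding double_cycle_def component_def by auto
qed

lemma cross_arc:
  assumes "i < k" "j < k" "i \<noteq> j" "x \<in> component i" "y \<in> component j"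
  shows "A x y \<or> A y x"
proof (rule ccontr)
  assume "\<not> (A x y \<or> A y x)"
  moreover have "x \<noteq> y" using component_disjoint[OF assms(1-3)] assms(4,5) by auto
  ultimately have "missing V A x y" using component_subset_V assms unfolding missing_def by auto
  then have "y \<in> component i" using missing_edge_within_component[OF assms(1)] assms(4) by blast
  then show False using component_disjoint[OF assms(1-3)] assms(5) by auto
qed

lemma succ_less: "succ i < k"
  using two_le_k unfolding succ_def by auto

lemma succ_neq: "i < k \<Longrightarrow> succ i \<noteq> i"
  using two_le_k unfolding succ_def by (cases "Suc i = k") auto

lemma succ_surj:
  assumes "q < k"
  obtains p where "p < k" "succ p = q"
proof (cases q)
  case 0
  then show ?thesis using two_le_k by (intro that[of "k - 1"]) (auto simp: succ_def)
next
  case (Suc p)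
  then show ?thesis using assms by (intro that[of p]) (auto simp: succ_def)
qed

lemma succ_mod_add: "succ ((s + d) mod k) = (s + Suc d) mod k"
  unfolding succ_def by (simp add: mod_Suc_eq)

lemma mod_add_neq_self:
  assumes "s < k" "0 < d" "d < k"
  shows "(s + d) mod k \<noteq> s"
  using assms by (cases "s + d < k") (auto simp: le_mod_geq)

lemma cycle_induct [consumes 3, case_names base step]:
  assumes "s < k" "q < k" "q \<noteq> s"
    and base: "P (succ s)"
    and step: "\<And>i. i < k \<Longrightarrow> i \<noteq> s \<Longrightarrow> succ i \<noteq> s \<Longrightarrow> P i \<Longrightarrow> P (succ i)"
  shows "P q"
  using assms(1-3)
proof (rule mod_cycle_induct)
  show "P (Suc s mod k)" using base unfolding succ_def .
  fix d assume d: "0 < d" "Suc d < k" "P ((s + d) mod k)"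
  have "(s + d) mod k \<noteq> s" "succ ((s + d) mod k) \<noteq> s"
    using mod_add_neq_self[OF assms(1), of d] mod_add_neq_self[OF assms(1), of "Suc d"] d(1,2)
    unfolding succ_mod_add by auto
  then have "P (succ ((s + d) mod k))" using step d(3) two_le_k by simp
  then show "P ((s + Suc d) mod k)" unfolding succ_mod_add .
qed

lemma cycle_induct_backward [consumes 3, case_names base step]:
  assumes "s < k" "q < k" "q \<noteq> s"
    and base: "\<And>i. i < k \<Longrightarrow> succ i = s \<Longrightarrow> P i"
    and step: "\<And>i. i < k \<Longrightarrow> i \<noteq> s \<Longrightarrow> succ i \<noteq> s \<Longrightarrow> P (succ i) \<Longrightarrow> P i"
  shows "P q"
  using assms(1-3)
proof (rule mod_cycle_induct_backward)
  have "succ ((s + (k - 1)) mod k) = s" using assms(1) unfolding succ_mod_add by simp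
  then show "P ((s + (k - 1)) mod k)" using base two_le_k by simp
  fix d assume d: "0 < d" "Suc d < k" "P ((s + Suc d) mod k)"
  have "(s + d) mod k \<noteq> s" "succ ((s + d) mod k) \<noteq> s"
    using mod_add_neq_self[OF assms(1), of d] mod_add_neq_self[OF assms(1), of "Suc d"] d(1,2)
    unfolding succ_mod_add by auto
  then show "P ((s + d) mod k)" using step[of "(s + d) mod k"] d(3) two_le_k succ_mod_add by simp
qed

definition forward_link :: "nat \<Rightarrow> bool" where
  "forward_link i \<longleftrightarrow> (let j = succ i in
     A (b i) (b j) \<and> A (a i) (a j) \<and> A (a i) (c j) \<and> A (c i) (a j) \<and> A (c i) (c j)
     \<and> A (b j) (a i) \<and> A (b j) (c i) \<and> A (a j) (b i) \<and> A (c j) (b i)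
     \<and> far A (a i) (b j) \<and> far A (c i) (b j) \<and> far A (b i) (a j) \<and> far A (b i) (c j))"

definition backward_link :: "nat \<Rightarrow> bool" where
  "backward_link i \<longleftrightarrow> (let j = succ i in
     A (b j) (b i) \<and> A (a j) (a i) \<and> A (a j) (c i) \<and> A (c j) (a i) \<and> A (c j) (c i)
     \<and> A (b i) (a j) \<and> A (b i) (c j) \<and> A (a i) (b j) \<and> A (c i) (b j)
     \<and> far A (b i) (b j) \<and> far A (a i) (a j) \<and> far A (a i) (c j) \<and> far A (c i) (a j) \<and> far A (c i) (c j))"

lemma link_cases:
  assumes i: "i < k"
  shows "forward_link i \<or> backward_link i"
proof -
  define j where "j = succ i"
  have j: "j < k" "j \<noteq> i" using succ_less succ_neq[OF i] unfolding j_def by auto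
  have far_if: "far A x y" if "x \<in> component i" "y \<in> component j" "y \<notin> outN V A x \<union> secN V A x" for x y
  proof (rule far_if_notin_outN_secN[OF oriented])
    show "y \<in> V" using component_subset_V[OF j(1)] that(2) by blast
    show "y \<noteq> x" using component_disjoint[OF i j(1)] j(2) that(1,2) by blast
  qed (use that(3) in simp)
  have loses_edges: "\<And>e e'. e \<in> {{a i, b i}, {b i, c i}} \<Longrightarrow> e' \<in> {{a j, b j}, {b j, c j}} \<Longrightarrow> loses V A e e'"
    using path_loses_succ[OF i] unfolding path_loses_def j_def by auto
  note ci = component_facts[OF i] and cj = component_facts[OF j(1)]
  have loses_ab_ab: "(A (a i) (a j) \<and> far A (a i) (b j) \<and> A (b i) (b j) \<and> far A (b i) (a j))
      \<or> (A (a i) (b j) \<and> far A (a i) (a j) \<and> A (b i) (a j) \<and> far A (b i) (b j))"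
    using loses_doubleton_cases[OF loses_edges[of "{a i, b i}" "{a j, b j}"]] ci cj far_if in_component by blast
  have loses_ab_bc: "(A (a i) (b j) \<and> far A (a i) (c j) \<and> A (b i) (c j) \<and> far A (b i) (b j))
      \<or> (A (a i) (c j) \<and> far A (a i) (b j) \<and> A (b i) (b j) \<and> far A (b i) (c j))"
    using loses_doubleton_cases[OF loses_edges[of "{a i, b i}" "{b j, c j}"]] ci cj far_if in_component by blast
  have loses_bc_ab: "(A (b i) (a j) \<and> far A (b i) (b j) \<and> A (c i) (b j) \<and> far A (c i) (a j))
      \<or> (A (b i) (b j) \<and> far A (b i) (a j) \<and> A (c i) (a j) \<and> far A (c i) (b j))"
    using loses_doubleton_cases[OF loses_edges[of "{b i, c i}" "{a j, b j}"]] ci cj far_if in_component by blast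
  have loses_bc_bc: "(A (b i) (b j) \<and> far A (b i) (c j) \<and> A (c i) (c j) \<and> far A (c i) (b j))
      \<or> (A (b i) (c j) \<and> far A (b i) (b j) \<and> A (c i) (b j) \<and> far A (c i) (c j))"
    using loses_doubleton_cases[OF loses_edges[of "{b i, c i}" "{b j, c j}"]] ci cj far_if in_component by blast
  have "\<And>x y. x \<in> component i \<Longrightarrow> y \<in> component j \<Longrightarrow> A x y \<or> A y x" using cross_arc i j by blast
  then have adj: "\<And>x y. x \<in> {a i, b i, c i} \<Longrightarrow> y \<in> {a j, b j, c j} \<Longrightarrow> \<not> A x y \<Longrightarrow> A y x"
    unfolding component_def by blast
  have no_arc: "\<And>x y. far A x y \<Longrightarrow> \<not> A x y" unfolding far_def by blast
  show ?thesis
  proof (cases "A (b i) (b j)")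
    case True
    then have "A (a i) (a j)" "A (a i) (c j)" "A (c i) (a j)" "A (c i) (c j)"
      "far A (a i) (b j)" "far A (c i) (b j)" "far A (b i) (a j)" "far A (b i) (c j)"
      using loses_ab_ab loses_ab_bc loses_bc_ab loses_bc_bc no_arc by auto
    moreover from this have "A (b j) (a i)" "A (b j) (c i)" "A (a j) (b i)" "A (c j) (b i)"
      using adj no_arc by simp_all
    ultimately have "forward_link i" using True unfolding forward_link_def j_def[symmetric] Let_def by simp
    then show ?thesis ..
  next
    case False
    then have "A (b j) (b i)" using adj by simp
    moreover have "A (b i) (a j)" "A (b i) (c j)" "A (a i) (b j)" "A (c i) (b j)"
      "far A (b i) (b j)" "far A (a i) (a j)" "far A (a i) (c j)" "far A (c i) (a j)" "far A (c i) (c j)"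
      using loses_ab_ab loses_ab_bc loses_bc_ab loses_bc_bc False no_arc by auto
    moreover from this have "A (a j) (a i)" "A (a j) (c i)" "A (c j) (a i)" "A (c j) (c i)"
      using adj no_arc by simp_all
    ultimately have "backward_link i" unfolding backward_link_def j_def[symmetric] Let_def by simp
    then show ?thesis ..
  qed
qed

lemma far_arc_across:
  assumes "far A x y" "A x w" "y \<in> component j" "w \<in> component s" "j < k" "s < k" "j \<noteq> s"
  shows "A y w"
  using far_arc_forward[OF assms(1,2)] cross_arc[OF assms(5-7,3,4)] by blast

lemma far_arc_across_backward:
  assumes "far A x y" "A w y" "x \<in> component i" "w \<in> component s" "i < k" "s < k" "i \<noteq> s"
  shows "A w x"
  using far_arc_backward[OF assms(1,2)] cross_arc[OF assms(5-7,3,4)] by blast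

definition outer_dominates :: "nat \<Rightarrow> nat \<Rightarrow> bool" where
  "outer_dominates s q \<longleftrightarrow> A (a q) (a s) \<and> A (c q) (a s) \<and> A (a q) (c s) \<and> A (c q) (c s)"

definition middle_dominates :: "nat \<Rightarrow> nat \<Rightarrow> bool" where
  "middle_dominates s q \<longleftrightarrow> A (b q) (a s) \<and> A (b q) (c s)"

lemma dominates_succ:
  assumes s: "s < k" and i: "i < k" "succ i \<noteq> s"
  shows "forward_link i \<Longrightarrow> outer_dominates s i \<Longrightarrow> middle_dominates s (succ i)"
    and "forward_link i \<Longrightarrow> middle_dominates s i \<Longrightarrow> outer_dominates s (succ i)"
    and "backward_link i \<Longrightarrow> outer_dominates s i \<Longrightarrow> outer_dominates s (succ i)"
    and "backward_link i \<Longrightarrow> middle_dominates s i \<Longrightarrow> middle_dominates s (succ i)"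
proof -
  note across = far_arc_across[OF _ _ _ _ succ_less s i(2)]
  have "A y w" if "far A x y" "A x w" "y \<in> {a (succ i), b (succ i), c (succ i)}" "w \<in> {a s, c s}" for x y w
    using across[OF that(1,2)] that(3,4) unfolding component_def by blast
  then show "forward_link i \<Longrightarrow> outer_dominates s i \<Longrightarrow> middle_dominates s (succ i)"
    and "forward_link i \<Longrightarrow> middle_dominates s i \<Longrightarrow> outer_dominates s (succ i)"
    and "backward_link i \<Longrightarrow> outer_dominates s i \<Longrightarrow> outer_dominates s (succ i)"
    and "backward_link i \<Longrightarrow> middle_dominates s i \<Longrightarrow> middle_dominates s (succ i)"
    unfolding forward_link_def backward_link_def outer_dominates_def middle_dominates_def Let_def
    by blast+
qed

lemma dominates_cases:
  assumes "s < k" "q < k" "q \<noteq> s"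
  shows "outer_dominates s q \<or> middle_dominates s q"
  using assms
proof (induction q rule: cycle_induct)
  case base
  show ?case using link_cases[OF assms(1)]
    unfolding forward_link_def backward_link_def outer_dominates_def middle_dominates_def Let_def by auto
next
  case (step i)
  then show ?case using link_cases[of i] dominates_succ[OF assms(1) step(1,3)] by blast
qed

lemma dominated_cases:
  assumes s: "s < k" and w: "w \<in> {a s, c s}" and "q < k" "q \<noteq> s"
  shows "(A w (a q) \<and> A w (c q)) \<or> A w (b q)"
  using assms(1,3,4)
proof (induction q rule: cycle_induct_backward)
  case (base i)
  then show ?case using link_cases w
    unfolding forward_link_def backward_link_def Let_def by auto
next
  case (step i)
  have "A w x" if "far A x y" "A w y" "x \<in> {a i, b i, c i}" for x y
  proof (rule far_arc_across_backward[OF that(1,2)])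
    show "x \<in> component i" "w \<in> component s" using that(3) w unfolding component_def by auto
  qed (use step.hyps s in auto)
  then show ?case using link_cases[OF step(1)] step(4)
    unfolding forward_link_def backward_link_def Let_def by blast
qed

lemma arcs_to_component:
  assumes "s < k" "w \<in> {a s, c s}" "q < k" "q \<noteq> s"
  shows "(outer_dominates s q \<and> A w (b q)) \<or> (middle_dominates s q \<and> A w (a q) \<and> A w (c q))"
  using dominates_cases[OF assms(1,3,4)] dominated_cases[OF assms] assms(2) asym
  unfolding outer_dominates_def middle_dominates_def by blast

definition beats :: "nat \<Rightarrow> nat \<Rightarrow> bool" where
  "beats s q \<longleftrightarrow> A (a s) (a q)"

lemma middle_dominates_iff_beats:
  assumes "s < k" "q < k" "q \<noteq> s"
  shows "middle_dominates s q \<longleftrightarrow> beats s q" "outer_dominates s q \<longleftrightarrow> \<not> beats s q"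
  using arcs_to_component[OF assms(1) _ assms(2,3), of "a s"] asym
  unfolding beats_def outer_dominates_def middle_dominates_def by blast+

lemma arcs_to_component_beats:
  assumes "s < k" "w \<in> {a s, c s}" "q < k" "q \<noteq> s"
  shows "beats s q \<Longrightarrow> A (b q) w \<and> A w (a q) \<and> A w (c q)"
    and "\<not> beats s q \<Longrightarrow> A (a q) w \<and> A (c q) w \<and> A w (b q)"
  using arcs_to_component[OF assms] middle_dominates_iff_beats[OF assms(1,3,4)] assms(2)
  unfolding outer_dominates_def middle_dominates_def by blast+

lemma beats_succ:
  assumes s: "s < k" and i: "i < k" "i \<noteq> s" "succ i \<noteq> s"
  shows "forward_link i \<Longrightarrow> beats s (succ i) \<longleftrightarrow> \<not> beats s i"
    and "backward_link i \<Longrightarrow> beats s (succ i) \<longleftrightarrow> beats s i"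
  using dominates_succ[OF s i(1,3)] middle_dominates_iff_beats[OF s i(1,2)]
    middle_dominates_iff_beats[OF s succ_less i(3)] by blast+

lemma beats_succ_self: "s < k \<Longrightarrow> beats s (succ s) \<longleftrightarrow> forward_link s"
  using link_cases asym unfolding beats_def forward_link_def backward_link_def Let_def by blast

lemma component_subset_K: "i < k \<Longrightarrow> component i \<subseteq> K"
  unfolding K_eq_UN_component by blast

lemma card_eq_sum_component: "X \<subseteq> K \<Longrightarrow> card X = (\<Sum>i<k. card (X \<inter> component i))"
proof -
  assume "X \<subseteq> K"
  then have "X = (\<Union>i<k. X \<inter> component i)" unfolding K_eq_UN_component by blast
  moreover have "card (\<Union>i<k. X \<inter> component i) = (\<Sum>i<k. card (X \<inter> component i))"
    by (rule card_UN_disjoint) (auto simp: component_def dest: component_disjoint)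
  ultimately show ?thesis by simp
qed

context
  fixes s w
  assumes s: "s < k" and w: "w \<in> {a s, c s}" and w_sink: "\<forall>x\<in>component s. \<not> A w x"
begin

lemma card_outN_component_le:
  assumes q: "q < k"
  shows "card (outN K A w \<inter> component q) \<le> (if q = s then 0 else if beats s q then 2 else 1)"
proof (cases "q = s")
  case True
  then have "outN K A w \<inter> component q = {}" using w_sink unfolding outN_def by auto
  then show ?thesis using True by simp
next
  case q_ne: False
  show ?thesis
  proof (cases "beats s q")
    case True
    then have "outN K A w \<inter> component q \<subseteq> {a q, c q}"
      using arcs_to_component_beats(1)[OF s w q q_ne] asym unfolding outN_def component_def by auto
    then have "card (outN K A w \<inter> component q) \<le> card {a q, c q}" by (rule card_mono[rotated]) simp
    also have "\<dots> \<le> 2" by (simp add: card_insert_if)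
    finally show ?thesis using True q_ne by simp
  next
    case False
    then have "outN K A w \<inter> component q \<subseteq> {b q}"
      using arcs_to_component_beats(2)[OF s w q q_ne] asym unfolding outN_def component_def by auto
    then have "card (outN K A w \<inter> component q) \<le> card {b q}" by (rule card_mono[rotated]) simp
    then show ?thesis using False q_ne by simp
  qed
qed

lemma secN_component_I:
  assumes "p < k" "q < k" "q \<noteq> s" "u \<in> component p" "y \<in> component q" "A w u" "A u y" "\<not> A w y"
  shows "y \<in> secN K A w"
proof (rule secN_I)
  show "y \<in> K" "u \<in> K" using component_subset_K assms(1,2,4,5) by blast+
  have "w \<in> component s" using w unfolding component_def by auto
  then show "y \<noteq> w" using component_disjoint[OF assms(2) s assms(3)] assms(5) by blast
qed (use assms in auto)

lemma middle_in_secN: "b s \<in> secN K A w"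
proof -
  have "(A w (a (succ s)) \<and> A (a (succ s)) (b s)) \<or> (A w (b (succ s)) \<and> A (b (succ s)) (b s))"
    using link_cases[OF s] w unfolding forward_link_def backward_link_def Let_def by auto
  moreover have "b s \<in> K" "a (succ s) \<in> K" "b (succ s) \<in> K" using in_K[OF s] in_K[OF succ_less] by auto
  moreover have "b s \<noteq> w" using component_facts[OF s] w by auto
  moreover have "\<not> A w (b s)" using w_sink in_component by blast
  ultimately show ?thesis using secN_I by metis
qed

lemma secN_component_beaten:
  assumes q: "q < k" "q \<noteq> s" "q \<noteq> succ s"
  shows "beats s q \<Longrightarrow> b q \<in> secN K A w"
    and "\<not> beats s q \<Longrightarrow> a q \<in> secN K A w \<and> c q \<in> secN K A w"
proof -
  obtain p where p: "p < k" "succ p = q" using succ_surj[OF q(1)] .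
  have p_ne: "p \<noteq> s" "succ p \<noteq> s" using p(2) q(2,3) by auto
  note arcs_p = arcs_to_component_beats[OF s w p(1) p_ne(1)]
  note arcs_q = arcs_to_component_beats[OF s w q(1,2)]
  note link = link_cases[OF p(1)] beats_succ[OF s p(1) p_ne]
  note sec = secN_component_I[OF p(1) q(1,2) _ _ _ _ asym]
  have in_pq: "a p \<in> component p" "b p \<in> component p" "a q \<in> component q" "b q \<in> component q" "c q \<in> component q"
    using in_component by auto
  show "beats s q \<Longrightarrow> b q \<in> secN K A w"
    using link arcs_p arcs_q sec in_pq p(2)
    unfolding forward_link_def backward_link_def Let_def by metis
  show "\<not> beats s q \<Longrightarrow> a q \<in> secN K A w \<and> c q \<in> secN K A w"
    using link arcs_p arcs_q sec in_pq p(2)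
    unfolding forward_link_def backward_link_def Let_def by metis
qed

lemma card_secN_component_ge:
  assumes q: "q < k"
  shows "(if q = s then 1 else if q = succ s then 0 else if beats s q then 1 else 2) \<le> card (secN K A w \<inter> component q)"
proof -
  have fin: "finite (secN K A w \<inter> component q)" unfolding component_def by simp
  consider "q = s" | "q \<noteq> s" "q = succ s" | "q \<noteq> s" "q \<noteq> succ s" "beats s q"
    | "q \<noteq> s" "q \<noteq> succ s" "\<not> beats s q" by blast
  then show ?thesis
  proof cases
    case 1
    then have "b s \<in> secN K A w \<inter> component q" using middle_in_secN in_component by auto
    then have "1 \<le> card (secN K A w \<inter> component q)" using fin by (auto simp: Suc_le_eq card_gt_0_iff)
    then show ?thesis using 1 by simp
  next
    case 3
    then have "b q \<in> secN K A w \<inter> component q" using secN_component_beaten(1)[OF q] in_component by auto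
    then have "1 \<le> card (secN K A w \<inter> component q)" using fin by (auto simp: Suc_le_eq card_gt_0_iff)
    then show ?thesis using 3 by simp
  next
    case 4
    then have "{a q, c q} \<subseteq> secN K A w \<inter> component q" using secN_component_beaten(2)[OF q] in_component by auto
    moreover have "card {a q, c q} = 2" using component_facts[OF q] by simp
    ultimately have "2 \<le> card (secN K A w \<inter> component q)" using card_mono[OF fin] by metis
    then show ?thesis using 4 by simp
  qed simp
qed

lemma card_outN_le_card_secN:
  assumes balanced: "2 * card {q. q < k \<and> beats s q} + 2 \<le> k + of_bool (forward_link s)"
  shows "card (outN K A w) \<le> card (secN K A w)"
proof -
  \<comment> \<open>Bound on the contribution of component q to |N+(w)| - |N++(w)|; the correction at
    \<open>succ s\<close> is needed because that component contains no guaranteed second out-neighbour.\<close>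
  define f :: "nat \<Rightarrow> int" where
    "f q = 2 * of_bool (beats s q) - 1 + of_bool (q = succ s) * (2 - of_bool (forward_link s))" for q
  have "\<not> beats s s" unfolding beats_def using irrefl by simp
  then have component_le: "int (card (outN K A w \<inter> component q)) - int (card (secN K A w \<inter> component q)) \<le> f q"
    if "q < k" for q
    using card_outN_component_le[OF that] card_secN_component_ge[OF that] beats_succ_self[OF s] succ_neq[OF s]
    unfolding f_def by (auto split: if_splits)
  have "int (card (outN K A w)) - int (card (secN K A w))
      = (\<Sum>q<k. int (card (outN K A w \<inter> component q)) - int (card (secN K A w \<inter> component q)))"
    using card_eq_sum_component[of "outN K A w"] card_eq_sum_component[of "secN K A w"]
    by (simp add: outN_def secN_def sum_subtractf)
  also have "\<dots> \<le> sum f {..<k}" using component_le by (rule sum_mono) simp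
  also have "\<dots> = 2 * int (card {q. q < k \<and> beats s q}) - int k + 2 - of_bool (forward_link s)"
  proof -
    have "{..<k} \<inter> {q. beats s q} = {q. q < k \<and> beats s q}" "{..<k} \<inter> {q. q = succ s} = {succ s}"
      using succ_less by auto
    then show ?thesis unfolding f_def
      by (simp add: sum.distrib sum_subtractf sum_distrib_left[symmetric] sum_distrib_right[symmetric])
  qed
  finally show ?thesis using balanced by (cases "forward_link s") simp_all
qed

end

lemma exists_forward_link: "\<exists>s<k. forward_link s"
  \<comment> \<open>With only backward links, a_0 would lose to every other a_q, but it beats its predecessor.\<close>
proof (rule ccontr)
  assume no_forward: "\<not> (\<exists>s<k. forward_link s)"
  then have backward: "backward_link i" if "i < k" for i using link_cases that by blast
  have k0: "0 < k" using two_le_k by simp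
  have not_beats: "\<not> beats 0 q" if "q < k" "q \<noteq> 0" for q
    using k0 that
  proof (induction q rule: cycle_induct)
    case base
    show ?case using beats_succ_self[OF k0] no_forward k0 by blast
  next
    case (step i)
    then show ?case using beats_succ(2)[OF k0 step(1-3) backward] by blast
  qed
  obtain p where p: "p < k" "succ p = 0" using succ_surj[OF k0] .
  then have "p \<noteq> 0" using succ_neq[OF k0] by metis
  moreover have "beats 0 p" using backward[OF p(1)] p(2) unfolding backward_link_def beats_def Let_def by simp
  ultimately show False using not_beats p(1) by blast
qed

lemma exists_balanced_index: "\<exists>s<k. 2 * card {q. q < k \<and> beats s q} + 2 \<le> k + of_bool (forward_link s)"
  \<comment> \<open>The scores sum to k(k - 1)/2, and some link is forward.\<close>
proof (rule ccontr)
  assume "\<not> ?thesis"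
  then have le: "k + of_bool (forward_link s) \<le> 2 * card {q. q < k \<and> beats s q} + 1" if "s < k" for s
    using that by fastforce
  have "{..<k} \<inter> {s. forward_link s} = {s. s < k \<and> forward_link s}" by auto
  then have "k * k + card {s. s < k \<and> forward_link s} = (\<Sum>s<k. k + of_bool (forward_link s))"
    by (simp add: sum.distrib)
  also have "\<dots> \<le> (\<Sum>s<k. 2 * card {q. q < k \<and> beats s q} + 1)" using le by (rule sum_mono) simp
  also have "\<dots> = k * k"
  proof -
    have "2 * (\<Sum>s\<in>{..<k}. card {q \<in> {..<k}. beats s q}) = card {..<k} * (card {..<k} - 1)"
      by (rule sum_card_out_tournament) (use cross_arc in_component asym in \<open>auto simp: beats_def\<close>)
    moreover have "{q \<in> {..<k}. beats s q} = {q. q < k \<and> beats s q}" for s by auto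
    ultimately have "2 * (\<Sum>s<k. card {q. q < k \<and> beats s q}) + k = k * k"
      using le_square[of k] by (simp add: diff_mult_distrib2)
    then show ?thesis unfolding sum.distrib sum_distrib_left[symmetric] by simp
  qed
  finally have "card {s. s < k \<and> forward_link s} = 0" by simp
  then show False using exists_forward_link by auto
qed

lemma exists_sink_end:
  assumes "s < k"
  shows "\<exists>w\<in>{a s, c s}. \<forall>x\<in>component s. \<not> A w x"
proof (cases "A (a s) (c s)")
  case True
  then have "\<forall>x\<in>component s. \<not> A (c s) x" using component_facts[OF assms] irrefl asym unfolding component_def by auto
  then show ?thesis by blast
next
  case False
  then have "\<forall>x\<in>component s. \<not> A (a s) x" using component_facts[OF assms] irrefl unfolding component_def by auto
  then show ?thesis by blast
qed

end

theorem proposition4p11: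
  fixes V :: "'v set" and A :: "'v \<Rightarrow> 'v \<Rightarrow> bool"
    and k :: nat and a b c :: "nat \<Rightarrow> 'v"
  assumes "tournament_missing_P2s V A"
    and "double_cycle V A k a b c"
  shows "\<exists>s<k. card (outN (Kset k a b c) A (a s)) \<le> card (secN (Kset k a b c) A (a s))
             \<or> card (outN (Kset k a b c) A (c s)) \<le> card (secN (Kset k a b c) A (c s))"
proof -
  interpret double_cycle_in_tournament V A k a b c using assms by unfold_locales
  obtain s where s: "s < k"
    and balanced: "2 * card {q. q < k \<and> beats s q} + 2 \<le> k + of_bool (forward_link s)"
    using exists_balanced_index by blast
  obtain w where w: "w \<in> {a s, c s}" and sink: "\<forall>x\<in>component s. \<not> A w x"
    using exists_sink_end[OF s] by blast
  have "card (outN (Kset k a b c) A w) \<le> card (secN (Kset k a b c) A w)"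
    using card_outN_le_card_secN[OF s w sink balanced] .
  then show ?thesis using s w by blast
qed

end
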